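(* Let $H$ be a Hermitian operator on a finite-dimensional Hilbert space $\mathcal{H}$ with ground-state space $g.s.(H)$. Suppose there exist a pure state $|\psi_g\rangle\in g.s.(H)$ and a finite group $\mathcal{G}=\{G_1,\dots,G_{|\mathcal{G}|}\}$ of unitary operators on $\mathcal{H}$ with $G_k|\psi_g\rangle=|\psi_g\rangle$ for all $k$. Let $\overline{H}=\frac{1}{|\mathcal{G}|}\sum_{k=1}^{|\mathcal{G}|}G_k^\dagger HG_k$. Then $g.s.(\overline{H})\subseteq g.s.(H)$.
   Context: The ground-state space $g.s.(H)$ of a Hermitian operator $H$ is the eigenspace of $H$ associated with its smallest eigenvalue. *)

theory Defs
  imports "HOL-Analysis.Analysis"
begin

definition adj :: "complex^'n^'m \<Rightarrow> complex^'m^'n" where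
  "adj A = (\<chi> i j. cnj (A $ j $ i))"

definition hermitian :: "complex^'n^'n \<Rightarrow> bool" where
  "hermitian A \<longleftrightarrow> adj A = A"

definition unitary_op :: "complex^'n^'n \<Rightarrow> bool" where
  "unitary_op U \<longleftrightarrow> adj U ** U = mat 1 \<and> U ** adj U = mat 1"

definition is_eigenvalue :: "complex^'n^'n \<Rightarrow> complex \<Rightarrow> bool" where
  "is_eigenvalue A e \<longleftrightarrow> (\<exists>v. v \<noteq> 0 \<and> A *v v = e *s v)"

text \<open>Smallest eigenvalue (eigenvalues of Hermitian operators are real).\<close>
definition ground_energy :: "complex^'n^'n \<Rightarrow> real" where
  "ground_energy A = Min (Re ` {e. is_eigenvalue A e})"

definition gs :: "complex^'n^'n \<Rightarrow> (complex^'n) set" where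
  "gs A = {v. A *v v = complex_of_real (ground_energy A) *s v}"

end

theory Submission
  imports Defs
begin

text \<open>
  Write \<open>E\<close> for the ground energy of \<open>H\<close> and \<open>H'\<close> for the twirl of \<open>H\<close> over \<open>\<G>\<close>.
  Since every \<open>U \<in> \<G>\<close> fixes \<open>\<psi>\<close> (hence so does \<open>U\<^sup>\<dagger>\<close>), \<open>\<psi>\<close> is an eigenvector of \<open>H'\<close> with
  eigenvalue \<open>E\<close>. The quadratic form of \<open>H'\<close> at \<open>x\<close> is the average of the forms of \<open>H\<close> at the
  vectors \<open>U x\<close>, which have the same norm as \<open>x\<close>; so it is bounded below by \<open>E |x|\<^sup>2\<close>, and \<open>E\<close>
  is also the ground energy of \<open>H'\<close>. If \<open>v\<close> is a ground state of \<open>H'\<close>, the nonnegative excesses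
  \<open>\<langle>U v, H U v\<rangle> - E |U v|\<^sup>2\<close> average to zero, so all vanish; the term \<open>U = 1\<close> says that the form
  of \<open>H\<close> attains its minimum \<open>E\<close> at \<open>v\<close>, which for a Hermitian operator forces \<open>H v = E v\<close>.
\<close>

definition cinner :: "complex^'n \<Rightarrow> complex^'n \<Rightarrow> complex" where
  "cinner x y = (\<Sum>i\<in>UNIV. cnj (x$i) * y$i)"

lemma inner_eq_Re_cinner: "x \<bullet> y = Re (cinner x y)"
  unfolding inner_vec_def cinner_def Re_sum by (simp add: inner_complex_def)

lemma cinner_matrix_vector_mult_right: "cinner x (A *v y) = cinner (adj A *v x) y"
proof -
  have adj_entry: "cnj ((adj A *v x)$j) = (\<Sum>i\<in>UNIV. cnj (x$i) * A$i$j)" for j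
    by (simp add: adj_def matrix_vector_mult_def mult.commute)
  have "cinner x (A *v y) = (\<Sum>i\<in>UNIV. \<Sum>j\<in>UNIV. cnj (x$i) * A$i$j * y$j)"
    by (simp add: cinner_def matrix_vector_mult_def sum_distrib_left mult.assoc)
  also have "\<dots> = (\<Sum>j\<in>UNIV. \<Sum>i\<in>UNIV. cnj (x$i) * A$i$j * y$j)"
    by (rule sum.swap)
  also have "\<dots> = cinner (adj A *v x) y"
    unfolding cinner_def adj_entry sum_distrib_right ..
  finally show ?thesis .
qed

lemma cinner_scalar_mult_left: "cinner (a *s x) y = cnj a * cinner x y"
  by (simp add: cinner_def sum_distrib_left mult_ac)

lemma cinner_scalar_mult_right: "cinner x (a *s y) = a * cinner x y"
  by (simp add: cinner_def sum_distrib_left mult_ac)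

lemma cinner_self: "cinner x x = of_real (x \<bullet> x)"
proof -
  have "cinner x x = (\<Sum>i\<in>UNIV. of_real ((Re (x$i))\<^sup>2 + (Im (x$i))\<^sup>2))"
    unfolding cinner_def by (rule sum.cong) (simp_all only: mult.commute[of "cnj _"] complex_mult_cnj)
  also have "\<dots> = of_real (x \<bullet> x)"
    by (simp add: inner_vec_def inner_complex_def power2_eq_square)
  finally show ?thesis .
qed

lemma adj_adj [simp]: "adj (adj A) = A"
  by (simp add: adj_def vec_eq_iff)

lemma adj_matrix_mult: "adj (A ** B) = adj B ** adj A"
  by (simp add: adj_def matrix_matrix_mult_def vec_eq_iff mult.commute)

lemma adj_diff: "adj (A - B) = adj A - adj B"
  by (simp add: adj_def vec_eq_iff)

lemma adj_scaleR: "adj (r *\<^sub>R A) = r *\<^sub>R adj A"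
  by (simp add: adj_def vec_eq_iff)

lemma adj_sum: "adj (\<Sum>i\<in>S. A i) = (\<Sum>i\<in>S. adj (A i))"
  by (simp add: adj_def vec_eq_iff)

lemma adj_mat_1: "adj (mat 1) = mat 1"
  by (simp add: adj_def mat_def vec_eq_iff)

lemma inner_matrix_vector_mult_right: "x \<bullet> (A *v y) = (adj A *v x) \<bullet> y"
  by (simp add: inner_eq_Re_cinner cinner_matrix_vector_mult_right)

lemma inner_matrix_vector_mult_left: "(A *v x) \<bullet> y = x \<bullet> (adj A *v y)"
  by (metis adj_adj inner_commute inner_matrix_vector_mult_right)

lemma hermitian_inner_commute: "hermitian A \<Longrightarrow> x \<bullet> (A *v y) = (A *v x) \<bullet> y"
  unfolding hermitian_def by (metis inner_matrix_vector_mult_right)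

lemma hermitian_diff_scalar: "hermitian H \<Longrightarrow> hermitian (H - r *\<^sub>R mat 1)"
  unfolding hermitian_def adj_diff adj_scaleR adj_mat_1 by simp

lemma unitary_op_inner_self: "unitary_op U \<Longrightarrow> (U *v x) \<bullet> (U *v x) = x \<bullet> x"
  by (simp add: unitary_op_def inner_matrix_vector_mult_left matrix_vector_mul_assoc)

lemma unitary_op_fixed_point_adj:
  assumes "unitary_op U" "U *v x = x"
  shows "adj U *v x = x"
  using assms unfolding unitary_op_def by (metis matrix_vector_mul_assoc matrix_vector_mul_lid)

lemma of_real_scalar_mult: "complex_of_real r *s x = r *\<^sub>R x"
  by (simp add: vec_eq_iff) (simp add: scaleR_conv_of_real)

lemma scaleR_matrix_vector_mult: "(r *\<^sub>R A) *v (x::complex^'n) = r *\<^sub>R (A *v x)"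
  by (simp add: vec_eq_iff matrix_vector_mult_def scaleR_sum_right)

lemma sum_matrix_vector_mult: "(\<Sum>i\<in>S. A i) *v (x::complex^'n) = (\<Sum>i\<in>S. A i *v x)"
  by (induction S rule: infinite_finite_induct) (simp_all add: matrix_vector_mult_add_rdistrib)

lemma inner_scalar_mult_right_same: "x \<bullet> (e *s x) = Re e * (x \<bullet> x)"
proof -
  have "x \<bullet> (e *s x) = Re (e * cinner x x)"
    by (simp only: inner_eq_Re_cinner cinner_scalar_mult_right)
  then show ?thesis by (simp add: cinner_self)
qed

lemma hermitian_cinner_commute: "hermitian A \<Longrightarrow> cinner x (A *v y) = cinner (A *v x) y"
  unfolding hermitian_def by (metis cinner_matrix_vector_mult_right)

lemma hermitian_eigenvalue_real:
  assumes "hermitian H" "H *v v = e *s v" "v \<noteq> 0"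
  shows "cnj e = e"
proof -
  have "e * cinner v v = cnj e * cinner v v"
    using hermitian_cinner_commute[OF assms(1), of v v]
    by (simp add: assms(2) cinner_scalar_mult_left cinner_scalar_mult_right)
  moreover have "cinner v v \<noteq> 0" using assms(3) by (simp add: cinner_self)
  ultimately show ?thesis by simp
qed

lemma hermitian_eigenvectors_orthogonal:
  assumes "hermitian H" "H *v v = e *s v" "v \<noteq> 0" "H *v w = f *s w" "w \<noteq> 0" "e \<noteq> f"
  shows "v \<bullet> w = 0"
proof -
  have "f * cinner v w = cnj e * cinner v w"
    using hermitian_cinner_commute[OF assms(1), of v w]
    by (simp add: assms(2,4) cinner_scalar_mult_left cinner_scalar_mult_right)
  then have "(f - e) * cinner v w = 0"
    using hermitian_eigenvalue_real[OF assms(1-3)] by (simp add: left_diff_distrib)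
  then have "cinner v w = 0"
    using assms(6) by simp
  then show ?thesis by (simp add: inner_eq_Re_cinner)
qed

lemma hermitian_finite_eigenvalues:
  assumes "hermitian H"
  shows "finite {e. is_eigenvalue H e}"
proof -
  define E where "E = {e. is_eigenvalue H e}"
  have "\<forall>e\<in>E. \<exists>v. v \<noteq> 0 \<and> H *v v = e *s v"
    by (simp add: E_def is_eigenvalue_def)
  then obtain f where f: "\<And>e. e \<in> E \<Longrightarrow> f e \<noteq> 0 \<and> H *v f e = e *s f e"
    by (metis bchoice)
  have "inj_on f E"
  proof (rule inj_onI)
    fix e e' assume "e \<in> E" "e' \<in> E" "f e = f e'"
    have "e *s f e = H *v f e'" using f[OF \<open>e \<in> E\<close>] \<open>f e = f e'\<close> by simp
    also have "\<dots> = e' *s f e" using f[OF \<open>e' \<in> E\<close>] \<open>f e = f e'\<close> by simp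
    finally have "e *s f e = e' *s f e" .
    then show "e = e'" using f \<open>e \<in> E\<close> by simp
  qed
  moreover have "independent (f ` E)"
  proof (rule pairwise_orthogonal_independent)
    show "pairwise orthogonal (f ` E)"
    proof (rule pairwise_imageI)
      fix e e' assume "e \<in> E" "e' \<in> E" "e \<noteq> e'"
      then show "orthogonal (f e) (f e')"
        unfolding orthogonal_def using f
        by (intro hermitian_eigenvectors_orthogonal[OF assms]) auto
    qed
    show "0 \<notin> f ` E" using f by auto
  qed
  then have "finite (f ` E)" by (simp add: independent_bound)
  ultimately show ?thesis
    unfolding E_def by (rule finite_imageD[rotated])
qed

lemma quadratic_nonneg_imp_linear_coeff_zero:
  fixes b d :: real
  assumes "\<And>t. 0 \<le> t * b + t\<^sup>2 * d"
  shows "b = 0"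
proof (rule ccontr)
  assume "b \<noteq> 0"
  define s where "s = 1 / (2 * (\<bar>d\<bar> + 1))"
  have "s > 0" "s * d < 1"
    unfolding s_def by (auto simp: field_simps abs_if)
  then have "s * b\<^sup>2 * (s * d - 1) < 0"
    using \<open>b \<noteq> 0\<close> by (simp add: mult_pos_neg)
  moreover have "(- s * b) * b + (- s * b)\<^sup>2 * d = s * b\<^sup>2 * (s * d - 1)"
    by (simp add: power2_eq_square algebra_simps)
  ultimately show False using assms[of "- s * b"] by linarith
qed

lemma hermitian_psd_form_zero_imp_null:
  assumes "hermitian K" "\<And>x. 0 \<le> x \<bullet> (K *v x)" "w \<bullet> (K *v w) = 0"
  shows "K *v w = 0"
proof -
  \<comment> \<open>Along the line \<open>w + t K w\<close> the form is \<open>2 t |K w|\<^sup>2 + O(t\<^sup>2)\<close>, which changes sign unless \<open>K w = 0\<close>.\<close>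
  define y where "y = K *v w"
  have wy: "w \<bullet> (K *v y) = y \<bullet> y"
    using hermitian_inner_commute[OF assms(1)] by (simp add: y_def)
  have yw: "y \<bullet> (K *v w) = y \<bullet> y"
    by (simp add: y_def)
  have "(w + t *\<^sub>R y) \<bullet> (K *v (w + t *\<^sub>R y)) = t * (2 * (y \<bullet> y)) + t\<^sup>2 * (y \<bullet> (K *v y))" for t
    by (simp add: matrix_vector_right_distrib linear_scale[OF matrix_vector_mul_linear]
        inner_add_left inner_add_right assms(3) wy yw power2_eq_square algebra_simps)
  then have "2 * (y \<bullet> y) = 0"
    using assms(2) by (intro quadratic_nonneg_imp_linear_coeff_zero[where d = "y \<bullet> (K *v y)"]) metis
  then show ?thesis by (simp add: y_def)
qed

lemma hermitian_form_minimizer_eigenvector: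
  assumes "hermitian H" "\<And>x. c * (x \<bullet> x) \<le> x \<bullet> (H *v x)" "w \<bullet> (H *v w) = c * (w \<bullet> w)"
  shows "H *v w = complex_of_real c *s w"
proof -
  define K where "K = H - c *\<^sub>R mat 1"
  have K_mult: "K *v x = H *v x - c *\<^sub>R x" for x
    by (simp add: K_def matrix_vector_mult_diff_rdistrib scaleR_matrix_vector_mult)
  have "K *v w = 0"
  proof (rule hermitian_psd_form_zero_imp_null)
    show "hermitian K" unfolding K_def using assms(1) by (rule hermitian_diff_scalar)
  qed (use assms(2,3) in \<open>simp_all add: K_mult inner_diff_right\<close>)
  then show ?thesis by (simp add: K_mult of_real_scalar_mult)
qed

lemma hermitian_form_attains_min:
  assumes "hermitian H"
  obtains w where "w \<bullet> w = 1" "\<And>v. (w \<bullet> (H *v w)) * (v \<bullet> v) \<le> v \<bullet> (H *v v)"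
proof -
  define q where "q v = v \<bullet> (H *v v)" for v
  have cont: "continuous_on (sphere 0 1) q"
    unfolding q_def
    by (intro continuous_on_inner continuous_on_id linear_continuous_on)
       (simp add: linear_conv_bounded_linear[symmetric])
  obtain w where w: "w \<in> sphere 0 1" and min: "\<And>u. u \<in> sphere 0 1 \<Longrightarrow> q w \<le> q u"
    using continuous_attains_inf[OF compact_sphere _ cont] sphere_eq_empty[of "0::complex^'n" 1] by auto
  have "q w * (v \<bullet> v) \<le> q v" for v
  proof (cases "v = 0")
    case False
    then have "norm v > 0" by simp
    then have "q w \<le> q ((1 / norm v) *\<^sub>R v)" by (intro min) simp
    also have "\<dots> = (1 / norm v)\<^sup>2 * q v"
      unfolding q_def by (simp add: linear_scale[OF matrix_vector_mul_linear] power2_eq_square)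
    finally have "q w \<le> q v / (norm v)\<^sup>2" by (simp add: power_one_over)
    then have "q w * (norm v)\<^sup>2 \<le> q v" using \<open>norm v > 0\<close> by (simp add: pos_le_divide_eq)
    then show ?thesis by (simp add: power2_norm_eq_inner)
  qed (simp add: q_def)
  moreover have "w \<bullet> w = 1" using w by (simp add: power2_norm_eq_inner[symmetric])
  ultimately show ?thesis using that unfolding q_def by blast
qed

lemma ground_energy_eqI:
  assumes "hermitian H" "H *v w = complex_of_real m *s w" "w \<noteq> 0"
    and "\<And>v. m * (v \<bullet> v) \<le> v \<bullet> (H *v v)"
  shows "ground_energy H = m"
  unfolding ground_energy_def
proof (rule Min_eqI)
  show "finite (Re ` {e. is_eigenvalue H e})"
    using hermitian_finite_eigenvalues[OF assms(1)] by simp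
  show "m \<in> Re ` {e. is_eigenvalue H e}"
    using assms(2,3) unfolding is_eigenvalue_def by (intro image_eqI[of _ _ "complex_of_real m"]) auto
next
  fix y assume "y \<in> Re ` {e. is_eigenvalue H e}"
  then obtain e v where "y = Re e" "v \<noteq> 0" "H *v v = e *s v"
    unfolding is_eigenvalue_def by auto
  with assms(4)[of v] show "m \<le> y" by (simp add: inner_scalar_mult_right_same)
qed

lemma ground_energy_le_form:
  assumes "hermitian H"
  shows "ground_energy H * (v \<bullet> v) \<le> v \<bullet> (H *v v)"
proof -
  obtain w where w: "w \<bullet> w = 1" and min: "\<And>v. (w \<bullet> (H *v w)) * (v \<bullet> v) \<le> v \<bullet> (H *v v)"
    using hermitian_form_attains_min[OF assms] by blast
  have "H *v w = complex_of_real (w \<bullet> (H *v w)) *s w"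
    using w by (intro hermitian_form_minimizer_eigenvector[OF assms min]) simp
  moreover have "w \<noteq> 0" using w by auto
  ultimately have "ground_energy H = w \<bullet> (H *v w)"
    using ground_energy_eqI[OF assms _ _ min] by blast
  with min show ?thesis by simp
qed

definition twirl :: "(complex^'n^'n) set \<Rightarrow> complex^'n^'n \<Rightarrow> complex^'n^'n" where
  "twirl S H = (1 / real (card S)) *\<^sub>R (\<Sum>U\<in>S. adj U ** H ** U)"

lemma hermitian_twirl: "hermitian H \<Longrightarrow> hermitian (twirl S H)"
  unfolding hermitian_def twirl_def by (simp add: adj_scaleR adj_sum adj_matrix_mult matrix_mul_assoc)

lemma twirl_matrix_vector_mult:
  "twirl S H *v x = (1 / real (card S)) *\<^sub>R (\<Sum>U\<in>S. adj U *v (H *v (U *v x)))"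
  by (simp add: twirl_def scaleR_matrix_vector_mult sum_matrix_vector_mult matrix_vector_mul_assoc
      matrix_mul_assoc)

lemma inner_twirl:
  "x \<bullet> (twirl S H *v y) = (\<Sum>U\<in>S. (U *v x) \<bullet> (H *v (U *v y))) / real (card S)"
  by (simp add: twirl_matrix_vector_mult inner_sum_right inner_matrix_vector_mult_right)

lemma twirl_common_eigenvector:
  assumes "finite S" "S \<noteq> {}" "\<forall>U\<in>S. unitary_op U" "\<forall>U\<in>S. U *v x = x"
    and "H *v x = complex_of_real c *s x"
  shows "twirl S H *v x = complex_of_real c *s x"
proof -
  have "adj U *v (H *v (U *v x)) = c *\<^sub>R x" if "U \<in> S" for U
  proof -
    have "adj U *v x = x" using assms(3,4) that by (intro unitary_op_fixed_point_adj) auto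
    then show ?thesis using assms(4,5) that
      by (simp add: of_real_scalar_mult linear_scale[OF matrix_vector_mul_linear])
  qed
  then have "twirl S H *v x = (1 / real (card S)) *\<^sub>R (\<Sum>U\<in>S. c *\<^sub>R x)"
    unfolding twirl_matrix_vector_mult by (metis (no_types, lifting) sum.cong)
  also have "\<dots> = c *\<^sub>R x"
    unfolding sum_constant_scaleR scaleR_scaleR using assms(1,2) by simp
  finally show ?thesis by (simp add: of_real_scalar_mult)
qed

lemma twirl_form_excess:
  assumes "finite S" "S \<noteq> {}" "\<forall>U\<in>S. unitary_op U"
  shows "x \<bullet> (twirl S H *v x) - c * (x \<bullet> x)
    = (\<Sum>U\<in>S. (U *v x) \<bullet> (H *v (U *v x)) - c * ((U *v x) \<bullet> (U *v x))) / real (card S)"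
proof -
  have "(\<Sum>U\<in>S. c * ((U *v x) \<bullet> (U *v x))) = real (card S) * (c * (x \<bullet> x))"
    using assms(3) by (simp add: unitary_op_inner_self)
  then have "c * (x \<bullet> x) = (\<Sum>U\<in>S. c * ((U *v x) \<bullet> (U *v x))) / real (card S)"
    using assms(1,2) by simp
  then show ?thesis
    by (simp only: inner_twirl sum_subtractf diff_divide_distrib)
qed

lemma ground_energy_twirl:
  assumes "hermitian H" "\<psi> \<noteq> 0" "\<psi> \<in> gs H"
    and "finite S" "S \<noteq> {}" "\<forall>U\<in>S. unitary_op U" "\<forall>U\<in>S. U *v \<psi> = \<psi>"
  shows "ground_energy (twirl S H) = ground_energy H"
proof (rule ground_energy_eqI)
  show "hermitian (twirl S H)" using assms(1) by (rule hermitian_twirl)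
  show "twirl S H *v \<psi> = complex_of_real (ground_energy H) *s \<psi>"
    using assms(3-7) by (intro twirl_common_eigenvector) (simp_all add: gs_def)
  show "ground_energy H * (v \<bullet> v) \<le> v \<bullet> (twirl S H *v v)" for v
  proof -
    have "0 \<le> (\<Sum>U\<in>S. (U *v v) \<bullet> (H *v (U *v v)) - ground_energy H * ((U *v v) \<bullet> (U *v v)))
        / real (card S)"
      by (intro divide_nonneg_nonneg sum_nonneg) (simp_all add: ground_energy_le_form[OF assms(1)])
    then show ?thesis using twirl_form_excess[OF assms(4-6), of v H "ground_energy H"] by simp
  qed
qed (use assms(2) in simp)

theorem mainTheorem7:
  fixes H :: "complex^'n^'n" and \<G> :: "(complex^'n^'n) set" and \<psi> :: "complex^'n"
  assumes "hermitian H"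
    and "norm \<psi> = 1" and "\<psi> \<in> gs H"
    and "finite \<G>" and "mat 1 \<in> \<G>"
    and "\<forall>A\<in>\<G>. \<forall>B\<in>\<G>. A ** B \<in> \<G>"
    and "\<forall>A\<in>\<G>. adj A \<in> \<G>"
    and "\<forall>U\<in>\<G>. unitary_op U"
    and "\<forall>U\<in>\<G>. U *v \<psi> = \<psi>"
  shows "gs ((1 / real (card \<G>)) *\<^sub>R (\<Sum>U\<in>\<G>. adj U ** H ** U)) \<subseteq> gs H"
proof
  fix v assume "v \<in> gs ((1 / real (card \<G>)) *\<^sub>R (\<Sum>U\<in>\<G>. adj U ** H ** U))"
  define E where "E = ground_energy H"
  define excess where "excess U = (U *v v) \<bullet> (H *v (U *v v)) - E * ((U *v v) \<bullet> (U *v v))" for U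
  have "\<G> \<noteq> {}" "\<psi> \<noteq> 0" using assms(2,5) by auto
  then have "twirl \<G> H *v v = complex_of_real E *s v"
    using \<open>v \<in> _\<close> ground_energy_twirl[OF assms(1) _ assms(3,4) _ assms(8,9)]
    by (simp add: gs_def twirl_def E_def)
  then have "(\<Sum>U\<in>\<G>. excess U) / real (card \<G>) = 0"
    using twirl_form_excess[OF assms(4) \<open>\<G> \<noteq> {}\<close> assms(8), of v H E]
    by (simp add: excess_def inner_scalar_mult_right_same)
  moreover have "0 \<le> excess U" for U
    unfolding excess_def E_def by (simp add: ground_energy_le_form[OF assms(1)])
  ultimately have "excess (mat 1) = 0"
    using assms(4,5) \<open>\<G> \<noteq> {}\<close> by (simp add: sum_nonneg_eq_0_iff)
  then have "H *v v = complex_of_real E *s v"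
    using ground_energy_le_form[OF assms(1)]
    by (intro hermitian_form_minimizer_eigenvector[OF assms(1)]) (simp_all add: excess_def E_def)
  then show "v \<in> gs H" by (simp add: gs_def E_def)
qed

end
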